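(* Let $a\geq 3$ and $m\geq 1$ be integers. There is a bijective correspondence between right $0$-pyramids of pieces of length $a$ and of size $m$, and $a$-ary trees with $m$ nodes.
   Context: For a positive integer $n$, an $n$-ary tree is a planar rooted tree all of whose vertices have order (degree) $1$ or $n+1$ and whose root has order $1$; the vertices of order $n+1$ are called nodes. A piece is an open interval $]s,s+a[$ with $s\in\mathbb Z$; two pieces are concurrent iff their intervals intersect. A heap is a finite configuration obtained by successively dropping pieces vertically towards the horizontal axis, each coming to rest on the axis or on top of the highest previously placed piece whose interval meets its own; configurations (not dropping orders) are counted. A pyramid is a heap with a unique bottom piece (exactly one piece on the axis); its size is its number of pieces. A right $0$-pyramid is a pyramid whose bottom piece covers $]0,a[$ and is a leftmost piece (no piece covers $]t,t+a[$ with $t<0$). *)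

theory Defs
  imports Main "HOL.Real"
begin

text \<open>A placed piece is a pair (s, h): the piece covers the open interval ]s, s+a[
  and sits at level h (h = 0 means it lies on the horizontal axis).\<close>

definition concurrent :: "nat \<Rightarrow> int \<Rightarrow> int \<Rightarrow> bool" where
  "concurrent a s t \<longleftrightarrow>
     {x::real. of_int s < x \<and> x < of_int s + of_nat a} \<inter>
     {x::real. of_int t < x \<and> x < of_int t + of_nat a} \<noteq> {}"

definition drop_level :: "nat \<Rightarrow> (int \<times> nat) set \<Rightarrow> int \<Rightarrow> nat" where
  "drop_level a H s =
     (if \<exists>(t, h) \<in> H. concurrent a s t
      then Suc (Max {h. \<exists>t. (t, h) \<in> H \<and> concurrent a s t})
      else 0)"

inductive heap :: "nat \<Rightarrow> (int \<times> nat) set \<Rightarrow> bool" for a :: nat where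
  heap_empty: "heap a {}"
| heap_drop: "heap a H \<Longrightarrow> heap a (insert (s, drop_level a H s) H)"

definition pyramid :: "nat \<Rightarrow> (int \<times> nat) set \<Rightarrow> bool" where
  "pyramid a H \<longleftrightarrow> heap a H \<and> card {p \<in> H. snd p = 0} = 1"

definition right_zero_pyramid :: "nat \<Rightarrow> (int \<times> nat) set \<Rightarrow> bool" where
  "right_zero_pyramid a H \<longleftrightarrow>
     pyramid a H \<and> (0, 0) \<in> H \<and> (\<forall>(t, h) \<in> H. \<not> t < 0)"

datatype ptree = PT "ptree list"

fun children :: "ptree \<Rightarrow> ptree list" where
  "children (PT cs) = cs"

text \<open>Every non-root vertex has order (number of children + 1); the root has order
  (number of children).  nonroot_ok n t: every vertex of t, regarded as a non-root vertex,
  has order 1 or n+1.\<close>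

fun nonroot_ok :: "nat \<Rightarrow> ptree \<Rightarrow> bool" where
  "nonroot_ok n (PT cs) =
     ((length cs + 1 = 1 \<or> length cs + 1 = n + 1) \<and> list_all (nonroot_ok n) cs)"

definition nary_tree :: "nat \<Rightarrow> ptree \<Rightarrow> bool" where
  "nary_tree n t \<longleftrightarrow> length (children t) = 1 \<and> list_all (nonroot_ok n) (children t)"

fun nonroot_nodes :: "nat \<Rightarrow> ptree \<Rightarrow> nat" where
  "nonroot_nodes n (PT cs) =
     (if length cs + 1 = n + 1 then 1 else 0) + sum_list (map (nonroot_nodes n) cs)"

definition num_nodes :: "nat \<Rightarrow> ptree \<Rightarrow> nat" where
  "num_nodes n t =
     (if length (children t) = n + 1 then 1 else 0) + sum_list (map (nonroot_nodes n) (children t))"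

end

theory Submission
  imports Defs
begin

text \<open>Every heap is obtained by dropping pieces at the positions of a word, and two
  consecutive letters may be swapped when their pieces are not concurrent.  An a-ary tree is read
  as such a word: a node drops a piece at position 0 and then the pieces of its k-th subtree
  shifted by k.  This gives a right 0-pyramid with one piece per node.  Conversely, removing a
  highest piece of a right 0-pyramid and growing the tree of the rest shows that every right
  0-pyramid arises.  Finally, the last letter of the word of a tree is the leftmost maximal piece
  of its heap, so the heap determines that letter and, by induction, the tree.
  The argument works for every a > 0.\<close>

lemma concurrent_iff: "concurrent a s t \<longleftrightarrow> \<bar>s - t\<bar> < int a"
proof
  assume "concurrent a s t"
  then obtain x :: real where
    "of_int s < x" "x < of_int s + of_nat a" "of_int t < x" "x < of_int t + of_nat a"
    unfolding concurrent_def by auto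
  then have "real_of_int (s - t) < of_nat a" "real_of_int (t - s) < of_nat a"
    by auto
  then show "\<bar>s - t\<bar> < int a"
    by linarith
next
  assume "\<bar>s - t\<bar> < int a"
  then have "real_of_int (s - t) \<le> of_int (int a - 1)" "real_of_int (t - s) \<le> of_int (int a - 1)"
    by (simp_all only: of_int_le_iff)
  then have "\<exists>x :: real. of_int s < x \<and> x < of_int s + of_nat a \<and> of_int t < x \<and> x < of_int t + of_nat a"
    by (intro exI[of _ "of_int (max s t) + 1/2"]) (auto simp: max_def)
  then show "concurrent a s t"
    unfolding concurrent_def by auto
qed

lemma concurrent_commute: "concurrent a s t \<longleftrightarrow> concurrent a t s"
  by (auto simp: concurrent_iff)

lemma concurrent_refl: "0 < a \<Longrightarrow> concurrent a s s"
  by (simp add: concurrent_iff)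

lemma concurrent_shift [simp]: "concurrent a (s + j) (t + j) \<longleftrightarrow> concurrent a s t"
  by (simp add: concurrent_iff)

subsection \<open>Heaps as words of drops\<close>

lemma drop_level_gt:
  assumes "finite H" "(t, h) \<in> H" "concurrent a s t"
  shows "h < drop_level a H s"
proof -
  have "finite {h. \<exists>t. (t, h) \<in> H \<and> concurrent a s t}"
    by (rule finite_subset[of _ "snd ` H"]) (use assms in force)+
  then have "h \<le> Max {h. \<exists>t. (t, h) \<in> H \<and> concurrent a s t}"
    using assms by (intro Max_ge) auto
  then show ?thesis
    using assms unfolding drop_level_def by auto
qed

lemma drop_level_pos_iff: "0 < drop_level a H s \<longleftrightarrow> (\<exists>(t, h) \<in> H. concurrent a s t)"
  unfolding drop_level_def by auto

lemma drop_level_insert_nonconcurrent: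
  "\<not> concurrent a s t \<Longrightarrow> drop_level a (insert (t, e) H) s = drop_level a H s"
proof -
  assume "\<not> concurrent a s t"
  then have "{h. \<exists>t'. (t', h) \<in> insert (t, e) H \<and> concurrent a s t'} =
               {h. \<exists>t'. (t', h) \<in> H \<and> concurrent a s t'}"
        and "(\<exists>(t', h) \<in> insert (t, e) H. concurrent a s t') \<longleftrightarrow> (\<exists>(t', h) \<in> H. concurrent a s t')"
    by auto
  then show ?thesis
    unfolding drop_level_def by simp
qed

definition drop_piece :: "nat \<Rightarrow> (int \<times> nat) set \<Rightarrow> int \<Rightarrow> (int \<times> nat) set" where
  "drop_piece a H s = insert (s, drop_level a H s) H"

definition drop_word :: "nat \<Rightarrow> (int \<times> nat) set \<Rightarrow> int list \<Rightarrow> (int \<times> nat) set" where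
  "drop_word a H ws = foldl (drop_piece a) H ws"

lemma drop_word_Nil [simp]: "drop_word a H [] = H"
  by (simp add: drop_word_def)

lemma drop_word_Cons [simp]: "drop_word a H (s # ws) = drop_word a (drop_piece a H s) ws"
  by (simp add: drop_word_def)

lemma drop_word_append: "drop_word a H (u @ v) = drop_word a (drop_word a H u) v"
  by (simp add: drop_word_def)

lemma drop_word_snoc: "drop_word a H (u @ [s]) = drop_piece a (drop_word a H u) s"
  by (simp add: drop_word_def)

lemma finite_drop_word: "finite H \<Longrightarrow> finite (drop_word a H ws)"
  by (induction ws arbitrary: H) (auto simp: drop_piece_def)

lemma subset_drop_word: "H \<subseteq> drop_word a H ws"
  by (induction ws arbitrary: H) (simp_all, metis drop_piece_def order_trans subset_insertI)

lemma fst_drop_word: "fst ` drop_word a H ws = fst ` H \<union> set ws"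
  by (induction ws arbitrary: H) (auto simp: drop_piece_def)

lemma drop_level_notin: "0 < a \<Longrightarrow> finite H \<Longrightarrow> (s, drop_level a H s) \<notin> H"
  using drop_level_gt concurrent_refl by blast

lemma card_drop_word:
  "0 < a \<Longrightarrow> finite H \<Longrightarrow> card (drop_word a H ws) = card H + length ws"
  by (induction ws arbitrary: H) (simp_all add: drop_piece_def drop_level_notin)

lemma drop_piece_cancel:
  assumes "0 < a" "finite H1" "finite H2" "drop_piece a H1 s = drop_piece a H2 s"
  shows "H1 = H2"
proof -
  let ?d1 = "drop_level a H1 s" and ?d2 = "drop_level a H2 s"
  have eq: "insert (s, ?d1) H1 = insert (s, ?d2) H2"
    using assms(4) unfolding drop_piece_def .
  have "?d1 = ?d2"
  proof (rule ccontr)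
    assume "?d1 \<noteq> ?d2"
    then have "(s, ?d2) \<in> H1" "(s, ?d1) \<in> H2"
      using eq by (metis insert_iff prod.inject)+
    then show False
      using drop_level_gt[OF assms(2)] drop_level_gt[OF assms(3)] concurrent_refl[OF assms(1)]
      by (metis less_asym)
  qed
  then show ?thesis
    using eq drop_level_notin[OF assms(1)] assms(2,3) by (metis insert_ident)
qed

lemma heap_drop_word: "heap a H \<Longrightarrow> heap a (drop_word a H ws)"
  by (induction ws arbitrary: H) (auto simp: drop_piece_def intro: heap.heap_drop)

lemma heap_finite: "heap a H \<Longrightarrow> finite H"
  by (induction rule: heap.induct) auto

lemma heap_remove_top:
  assumes "heap a H" "0 < a" "(s, d) \<in> H" "\<forall>(t, h) \<in> H. concurrent a s t \<longrightarrow> h \<le> d"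
  shows "heap a (H - {(s, d)}) \<and> drop_level a (H - {(s, d)}) s = d"
  using assms
proof (induction arbitrary: s d rule: heap.induct)
  case heap_empty
  then show ?case by simp
next
  case (heap_drop H t)
  let ?e = "drop_level a H t"
  have fin: "finite H"
    using heap_drop.hyps heap_finite by blast
  show ?case
  proof (cases "(s, d) = (t, ?e)")
    case True
    then have "insert (t, ?e) H - {(s, d)} = H"
      using drop_level_notin[OF \<open>0 < a\<close> fin] by auto
    then show ?thesis
      using True heap_drop.hyps by auto
  next
    case False
    then have sd: "(s, d) \<in> H"
      using heap_drop.prems by auto
    have "\<not> concurrent a s t"
    proof
      assume "concurrent a s t"
      then have "?e \<le> d" and "d < ?e"
        using heap_drop.prems drop_level_gt[OF fin sd] concurrent_commute by auto
      then show False by simp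
    qed
    have IH: "heap a (H - {(s, d)}) \<and> drop_level a (H - {(s, d)}) s = d"
      using heap_drop.IH[OF \<open>0 < a\<close> sd] heap_drop.prems by auto
    have "?e = drop_level a (insert (s, d) (H - {(s, d)})) t"
      using sd by (simp add: insert_absorb)
    also have "\<dots> = drop_level a (H - {(s, d)}) t"
      using \<open>\<not> concurrent a s t\<close> concurrent_commute
      by (metis drop_level_insert_nonconcurrent)
    finally have "heap a (insert (t, ?e) (H - {(s, d)}))"
      using heap.heap_drop[of a "H - {(s, d)}" t] IH by simp
    moreover have "drop_level a (insert (t, ?e) (H - {(s, d)})) s = d"
      using drop_level_insert_nonconcurrent[OF \<open>\<not> concurrent a s t\<close>] IH by simp
    moreover have "insert (t, ?e) H - {(s, d)} = insert (t, ?e) (H - {(s, d)})"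
      using False by auto
    ultimately show ?thesis
      by simp
  qed
qed

definition drop_equiv :: "nat \<Rightarrow> int list \<Rightarrow> int list \<Rightarrow> bool" where
  "drop_equiv a u v \<longleftrightarrow> (\<forall>H. drop_word a H u = drop_word a H v)"

lemma drop_equiv_refl: "drop_equiv a u u"
  by (simp add: drop_equiv_def)

lemma drop_equiv_sym: "drop_equiv a u v \<Longrightarrow> drop_equiv a v u"
  by (simp add: drop_equiv_def)

lemma drop_equiv_trans [trans]: "drop_equiv a u v \<Longrightarrow> drop_equiv a v x \<Longrightarrow> drop_equiv a u x"
  by (simp add: drop_equiv_def)

lemma drop_equiv_append:
  "drop_equiv a u v \<Longrightarrow> drop_equiv a u' v' \<Longrightarrow> drop_equiv a (u @ u') (v @ v')"
  by (simp add: drop_equiv_def drop_word_append)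

lemma drop_equiv_swap: "\<not> concurrent a s t \<Longrightarrow> drop_equiv a [s, t] [t, s]"
  using drop_level_insert_nonconcurrent[of a s t] drop_level_insert_nonconcurrent[of a t s]
  by (auto simp: drop_equiv_def drop_piece_def concurrent_commute)

lemma drop_equiv_move_to_front:
  "\<forall>t \<in> set u. \<not> concurrent a s t \<Longrightarrow> drop_equiv a (u @ [s]) (s # u)"
proof (induction u)
  case Nil
  then show ?case by (simp add: drop_equiv_refl)
next
  case (Cons t u)
  then have "drop_equiv a ([t] @ (u @ [s])) ([t] @ (s # u))"
    by (intro drop_equiv_append drop_equiv_refl) auto
  moreover have "drop_equiv a ([t, s] @ u) ([s, t] @ u)"
    using Cons.prems concurrent_commute by (intro drop_equiv_append drop_equiv_refl drop_equiv_swap) auto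
  ultimately show ?case
    by (auto intro: drop_equiv_trans)
qed

definition shift_heap :: "int \<Rightarrow> (int \<times> nat) set \<Rightarrow> (int \<times> nat) set" where
  "shift_heap j H = (\<lambda>(t, h). (t + j, h)) ` H"

lemma drop_level_shift_heap: "drop_level a (shift_heap j H) (s + j) = drop_level a H s"
proof -
  have "{h. \<exists>t. (t, h) \<in> shift_heap j H \<and> concurrent a (s + j) t} =
        {h. \<exists>t. (t, h) \<in> H \<and> concurrent a s t}"
  proof (intro set_eqI iffI)
    fix h
    assume "h \<in> {h. \<exists>t. (t, h) \<in> shift_heap j H \<and> concurrent a (s + j) t}"
    then obtain t where "(t, h) \<in> H" "concurrent a (s + j) (t + j)"
      unfolding shift_heap_def by auto
    then show "h \<in> {h. \<exists>t. (t, h) \<in> H \<and> concurrent a s t}"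
      by auto
  next
    fix h
    assume "h \<in> {h. \<exists>t. (t, h) \<in> H \<and> concurrent a s t}"
    then obtain t where "(t, h) \<in> H" "concurrent a (s + j) (t + j)"
      by auto
    then show "h \<in> {h. \<exists>t. (t, h) \<in> shift_heap j H \<and> concurrent a (s + j) t}"
      unfolding shift_heap_def by force
  qed
  moreover have "(\<exists>(t, h) \<in> shift_heap j H. concurrent a (s + j) t) \<longleftrightarrow> (\<exists>(t, h) \<in> H. concurrent a s t)"
    unfolding shift_heap_def by force
  ultimately show ?thesis
    unfolding drop_level_def by simp
qed

lemma drop_word_shift:
  "drop_word a (shift_heap j H) (map (\<lambda>x. x + j) ws) = shift_heap j (drop_word a H ws)"
proof (induction ws arbitrary: H)
  case (Cons s ws)
  have "drop_piece a (shift_heap j H) (s + j) = shift_heap j (drop_piece a H s)"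
    unfolding drop_piece_def drop_level_shift_heap by (simp add: shift_heap_def)
  then show ?case
    using Cons by simp
qed simp

lemma shift_heap_inverse: "shift_heap j (shift_heap (- j) H) = H"
  unfolding shift_heap_def image_image by (simp add: case_prod_beta)

lemma drop_equiv_shift:
  "drop_equiv a u v \<Longrightarrow> drop_equiv a (map (\<lambda>x. x + j) u) (map (\<lambda>x. x + j) v)"
  unfolding drop_equiv_def by (metis drop_word_shift shift_heap_inverse)

definition top_positions :: "nat \<Rightarrow> (int \<times> nat) set \<Rightarrow> int set" where
  "top_positions a H =
     {s. \<exists>h. (s, h) \<in> H \<and> (\<forall>t h'. (t, h') \<in> H \<and> concurrent a s t \<longrightarrow> h' \<le> h)}"

definition word_tops :: "nat \<Rightarrow> int set \<Rightarrow> int list \<Rightarrow> int set" where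
  "word_tops a S ws = foldl (\<lambda>S s. insert s {x \<in> S. \<not> concurrent a x s}) S ws"

lemma word_tops_Nil [simp]: "word_tops a S [] = S"
  by (simp add: word_tops_def)

lemma word_tops_Cons [simp]:
  "word_tops a S (s # ws) = word_tops a (insert s {x \<in> S. \<not> concurrent a x s}) ws"
  by (simp add: word_tops_def)

lemma word_tops_eq: "word_tops a S ws = {x \<in> S. \<forall>y \<in> set ws. \<not> concurrent a x y} \<union> word_tops a {} ws"
proof (induction ws arbitrary: S)
  case (Cons s ws)
  have "word_tops a {} (s # ws) = {x \<in> {s}. \<forall>y \<in> set ws. \<not> concurrent a x y} \<union> word_tops a {} ws"
    using Cons.IH[of "{s}"] by simp
  then show ?case
    using Cons.IH[of "insert s {x \<in> S. \<not> concurrent a x s}"] by auto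
qed simp

lemma word_tops_append:
  "word_tops a {} (u @ v) = {x \<in> word_tops a {} u. \<forall>y \<in> set v. \<not> concurrent a x y} \<union> word_tops a {} v"
  by (simp add: word_tops_def word_tops_eq[unfolded word_tops_def, symmetric])

lemma last_in_word_tops: "s \<in> word_tops a {} (u @ [s])"
  by (simp add: word_tops_append)

lemma word_tops_subset: "word_tops a {} ws \<subseteq> set ws"
  by (induction ws rule: rev_induct) (auto simp: word_tops_append)

lemma word_tops_shift: "word_tops a {} (map (\<lambda>x. x + j) ws) = (\<lambda>x. x + j) ` word_tops a {} ws"
  by (induction ws rule: rev_induct) (auto simp: word_tops_append)

lemma top_positions_drop_piece:
  assumes "finite H"
  shows "top_positions a (drop_piece a H s) = insert s {x \<in> top_positions a H. \<not> concurrent a x s}"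
proof (intro set_eqI iffI)
  let ?d = "drop_level a H s"
  fix y
  assume "y \<in> top_positions a (drop_piece a H s)"
  then obtain h where yh: "(y, h) \<in> insert (s, ?d) H"
    and top: "\<forall>t h'. (t, h') \<in> insert (s, ?d) H \<and> concurrent a y t \<longrightarrow> h' \<le> h"
    unfolding top_positions_def drop_piece_def by auto
  show "y \<in> insert s {x \<in> top_positions a H. \<not> concurrent a x s}"
  proof (cases "y = s")
    case False
    then have "(y, h) \<in> H"
      using yh by auto
    then have "\<not> concurrent a y s"
      using top drop_level_gt[OF assms] concurrent_commute by (metis insertI1 leD)
    moreover have "y \<in> top_positions a H"
      using top \<open>(y, h) \<in> H\<close> unfolding top_positions_def by blast
    ultimately show ?thesis
      by simp
  qed simp
next
  let ?d = "drop_level a H s"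
  fix y
  assume y: "y \<in> insert s {x \<in> top_positions a H. \<not> concurrent a x s}"
  show "y \<in> top_positions a (drop_piece a H s)"
  proof (cases "y = s")
    case True
    have "\<forall>t h'. (t, h') \<in> insert (s, ?d) H \<and> concurrent a s t \<longrightarrow> h' \<le> ?d"
      using drop_level_gt[OF assms] by fastforce
    then show ?thesis
      using True unfolding top_positions_def drop_piece_def by auto
  next
    case False
    then show ?thesis
      using y unfolding top_positions_def drop_piece_def by auto
  qed
qed

lemma top_positions_drop_word:
  "finite H \<Longrightarrow> top_positions a (drop_word a H ws) = word_tops a (top_positions a H) ws"
proof (induction ws arbitrary: H)
  case (Cons s ws)
  then show ?case
    using top_positions_drop_piece[OF Cons.prems] by (simp add: drop_piece_def)
qed simp

corollary top_positions_drop_word_empty: "top_positions a (drop_word a {} ws) = word_tops a {} ws"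
  using top_positions_drop_word[of "{}"] by (simp add: top_positions_def)

fun anchored :: "nat \<Rightarrow> int set \<Rightarrow> int list \<Rightarrow> bool" where
  "anchored a S [] \<longleftrightarrow> True"
| "anchored a S (s # ws) \<longleftrightarrow> (\<exists>t \<in> S. concurrent a s t) \<and> anchored a (insert s S) ws"

lemma anchored_append: "anchored a S (u @ v) \<longleftrightarrow> anchored a S u \<and> anchored a (S \<union> set u) v"
  by (induction u arbitrary: S) auto

lemma anchored_mono: "anchored a S ws \<Longrightarrow> S \<subseteq> T \<Longrightarrow> anchored a T ws"
proof (induction ws arbitrary: S T)
  case (Cons s ws)
  then have "anchored a (insert s T) ws"
    by (meson anchored.simps(2) insert_mono)
  then show ?case
    using Cons.prems by auto
qed simp

lemma anchored_shift: "anchored a S ws \<Longrightarrow> anchored a ((\<lambda>x. x + j) ` S) (map (\<lambda>x. x + j) ws)"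
proof (induction ws arbitrary: S)
  case (Cons s ws)
  have "anchored a ((\<lambda>x. x + j) ` insert s S) (map (\<lambda>x. x + j) ws)"
    using Cons.IH[of "insert s S"] Cons.prems by simp
  moreover obtain t where "t \<in> S" "concurrent a s t"
    using Cons.prems by auto
  then have "\<exists>t \<in> (\<lambda>x. x + j) ` S. concurrent a (s + j) t"
    by force
  ultimately show ?case
    by simp
qed simp

lemma ground_drop_word_anchored:
  assumes "anchored a S ws" "S \<subseteq> fst ` H"
  shows "{p \<in> drop_word a H ws. snd p = 0} = {p \<in> H. snd p = 0}"
  using assms
proof (induction ws arbitrary: S H)
  case (Cons s ws)
  then obtain t h where "(t, h) \<in> H" "concurrent a s t"
    by force
  then have "0 < drop_level a H s"
    by (auto simp: drop_level_pos_iff)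
  moreover have "{p \<in> drop_word a (drop_piece a H s) ws. snd p = 0} = {p \<in> drop_piece a H s. snd p = 0}"
    using Cons by (intro Cons.IH[of "insert s S"]) (auto simp: drop_piece_def)
  ultimately show ?case
    by (auto simp: drop_piece_def)
qed simp

subsection \<open>The drop word of a tree\<close>

fun tree_word :: "ptree \<Rightarrow> int list" and forest_word :: "int \<Rightarrow> ptree list \<Rightarrow> int list" where
  "tree_word (PT cs) = (if cs = [] then [] else 0 # forest_word 0 cs)"
| "forest_word j [] = []"
| "forest_word j (c # cs) = forest_word (j + 1) cs @ map (\<lambda>x. x + j) (tree_word c)"

text \<open>Pruning turns into a leaf the node that drops the last letter of the drop word;
  that letter is the last piece.\<close>

fun prune :: "ptree \<Rightarrow> ptree" and prune_forest :: "ptree list \<Rightarrow> ptree list" where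
  "prune (PT cs) = (if list_all (\<lambda>c. c = PT []) cs then PT [] else PT (prune_forest cs))"
| "prune_forest [] = []"
| "prune_forest (c # cs) = (if c = PT [] then c # prune_forest cs else prune c # cs)"

fun last_piece :: "ptree \<Rightarrow> int" and forest_last_piece :: "int \<Rightarrow> ptree list \<Rightarrow> int" where
  "last_piece (PT cs) = (if list_all (\<lambda>c. c = PT []) cs then 0 else forest_last_piece 0 cs)"
| "forest_last_piece j [] = 0"
| "forest_last_piece j (c # cs) =
     (if c = PT [] then forest_last_piece (j + 1) cs else j + last_piece c)"

abbreviation bud :: "nat \<Rightarrow> ptree" where
  "bud a \<equiv> PT (replicate a (PT []))"

lemma nonroot_ok_bud: "nonroot_ok a (bud a)"
  by (simp add: list_all_iff)

lemma forest_word_leaves: "list_all (\<lambda>c. c = PT []) cs \<Longrightarrow> forest_word j cs = []"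
  by (induction cs arbitrary: j) auto

lemma tree_word_bud: "0 < a \<Longrightarrow> tree_word (bud a) = [0]"
  by (simp add: forest_word_leaves list_all_iff)

lemma tree_word_eq_Nil_iff: "tree_word c = [] \<longleftrightarrow> c = PT []"
  by (cases c) auto

lemma tree_word_Cons: "c \<noteq> PT [] \<Longrightarrow> tree_word c = 0 # tl (tree_word c)"
  by (cases c) auto

lemma set_forest_word:
  "z \<in> set (forest_word j cs) \<longleftrightarrow> (\<exists>k < length cs. z - (j + int k) \<in> set (tree_word (cs ! k)))"
proof (induction cs arbitrary: j)
  case (Cons c cs)
  have "z \<in> set (forest_word j (c # cs)) \<longleftrightarrow>
          (\<exists>k < length cs. z - (j + 1 + int k) \<in> set (tree_word (cs ! k))) \<or> z - j \<in> set (tree_word c)"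
    using Cons.IH[of "j + 1"] by force
  also have "\<dots> \<longleftrightarrow> (\<exists>k < length (c # cs). z - (j + int k) \<in> set (tree_word ((c # cs) ! k)))"
    by (auto simp: less_Suc_eq_0_disj add.assoc)
  finally show ?case .
qed simp

lemma tree_word_nonneg: "z \<in> set (tree_word c) \<Longrightarrow> 0 \<le> z"
proof (induction c arbitrary: z rule: ptree.induct)
  case (PT cs)
  show ?case
  proof (cases "z = 0")
    case False
    then obtain k where "k < length cs" "z - int k \<in> set (tree_word (cs ! k))"
      using PT.prems by (auto simp: set_forest_word split: if_splits)
    then show ?thesis
      using PT.IH[of "cs ! k" "z - int k"] by auto
  qed simp
qed

lemma forest_word_ge: "z \<in> set (forest_word j cs) \<Longrightarrow> j \<le> z"
  using tree_word_nonneg by (fastforce simp: set_forest_word)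

lemma length_forest_word: "length (forest_word j cs) = sum_list (map (\<lambda>c. length (tree_word c)) cs)"
  by (induction cs arbitrary: j) auto

lemma length_tree_word: "0 < a \<Longrightarrow> nonroot_ok a c \<Longrightarrow> length (tree_word c) = nonroot_nodes a c"
proof (induction c rule: ptree.induct)
  case (PT cs)
  have "sum_list (map (\<lambda>c. length (tree_word c)) cs) = sum_list (map (nonroot_nodes a) cs)"
    using PT by (intro arg_cong[where f = sum_list] map_cong) (auto simp: list_all_iff)
  then show ?case
    using PT.prems by (auto simp: length_forest_word)
qed

lemma length_prune_forest: "length (prune_forest cs) = length cs"
  by (induction cs) auto

lemma prune_forest_nonleaf: "\<not> list_all (\<lambda>c. c = PT []) cs \<Longrightarrow> prune_forest cs \<noteq> []"
  by (cases cs) auto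

lemma nonroot_ok_prune: "nonroot_ok a c \<Longrightarrow> nonroot_ok a (prune c)"
proof (induction c rule: ptree.induct)
  case (PT cs)
  have "list_all (nonroot_ok a) ds \<Longrightarrow> \<forall>d \<in> set ds. nonroot_ok a d \<longrightarrow> nonroot_ok a (prune d)
          \<Longrightarrow> list_all (nonroot_ok a) (prune_forest ds)" for ds
    by (induction ds) auto
  then show ?case
    using PT by (auto simp: length_prune_forest list_all_iff)
qed

lemma forest_word_prune:
  assumes "\<not> list_all (\<lambda>c. c = PT []) cs"
    and "\<forall>c \<in> set cs. c \<noteq> PT [] \<longrightarrow> tree_word c = tree_word (prune c) @ [last_piece c]"
  shows "forest_word j cs = forest_word j (prune_forest cs) @ [forest_last_piece j cs]"
  using assms by (induction cs arbitrary: j) auto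

lemma tree_word_prune: "c \<noteq> PT [] \<Longrightarrow> tree_word c = tree_word (prune c) @ [last_piece c]"
proof (induction c rule: ptree.induct)
  case (PT cs)
  show ?case
  proof (cases "list_all (\<lambda>c. c = PT []) cs")
    case True
    then show ?thesis
      using PT.prems by (simp add: forest_word_leaves)
  next
    case False
    then have "forest_word 0 cs = forest_word 0 (prune_forest cs) @ [forest_last_piece 0 cs]"
      using PT.IH by (intro forest_word_prune) auto
    moreover have "cs \<noteq> []"
      using False by auto
    ultimately show ?thesis
      using False prune_forest_nonleaf[OF False] by simp
  qed
qed

lemma last_piece_in_tree_word: "c \<noteq> PT [] \<Longrightarrow> last_piece c \<in> set (tree_word c)"
  using tree_word_prune[of c] by (metis in_set_conv_decomp)

lemma forest_last_piece_ge: "\<not> list_all (\<lambda>c. c = PT []) cs \<Longrightarrow> j \<le> forest_last_piece j cs"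
  using forest_word_prune[of cs j] tree_word_prune forest_word_ge
  by (metis in_set_conv_decomp)

lemma last_piece_prune_leaf: "c \<noteq> PT [] \<Longrightarrow> prune c = PT [] \<Longrightarrow> last_piece c = 0"
  by (cases c) (auto dest: prune_forest_nonleaf split: if_splits)

lemma tree_word_covers:
  assumes "nonroot_ok a c" "z \<in> set (tree_word c)" "0 \<le> p" "p \<le> z"
  shows "\<exists>y \<in> set (tree_word c). concurrent a p y"
  using assms
proof (induction c arbitrary: z p rule: ptree.induct)
  case (PT cs)
  have cs: "cs \<noteq> []" "length cs = a"
    using PT.prems by auto
  show ?case
  proof (cases "p < int a")
    case True
    then show ?thesis
      using cs PT.prems by (intro bexI[of _ 0]) (auto simp: concurrent_iff)
  next
    case False
    moreover have "0 < int a"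
      using cs by auto
    ultimately have "z \<noteq> 0"
      using PT.prems by auto
    then obtain k where k: "k < length cs" "z - int k \<in> set (tree_word (cs ! k))"
      using PT.prems by (auto simp: set_forest_word split: if_splits)
    moreover have "nonroot_ok a (cs ! k)"
      using PT.prems k by (auto simp: list_all_iff)
    ultimately obtain y where y: "y \<in> set (tree_word (cs ! k))" "concurrent a (p - int k) y"
      using PT.IH[of "cs ! k" "z - int k" "p - int k"] cs False PT.prems by auto
    then have "y + int k \<in> set (tree_word (PT cs))"
      using cs k by (auto simp: set_forest_word)
    moreover have "concurrent a p (y + int k)"
      using y(2) concurrent_shift[of a "p - int k" "int k" y] by simp
    ultimately show ?thesis
      by blast
  qed
qed

lemma forest_last_piece_le_word_tops:
  assumes "\<not> list_all (\<lambda>c. c = PT []) cs" "list_all (nonroot_ok a) cs"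
    and "\<forall>c \<in> set cs. c \<noteq> PT [] \<longrightarrow> (\<forall>x \<in> word_tops a {} (tree_word c). last_piece c \<le> x)"
    and "x \<in> word_tops a {} (forest_word j cs)"
  shows "forest_last_piece j cs \<le> x"
  using assms
proof (induction cs arbitrary: j)
  case (Cons c cs)
  show ?case
  proof (cases "c = PT []")
    case True
    then show ?thesis
      using Cons by auto
  next
    case False
    let ?M = "map (\<lambda>x. x + j) (tree_word c)"
    have x: "x \<in> {x \<in> word_tops a {} (forest_word (j + 1) cs). \<forall>y \<in> set ?M. \<not> concurrent a x y}
                 \<union> (\<lambda>x. x + j) ` word_tops a {} (tree_word c)"
      using Cons.prems(4) by (simp add: word_tops_append word_tops_shift)
    show ?thesis
    proof (cases "x \<in> (\<lambda>x. x + j) ` word_tops a {} (tree_word c)")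
      case True
      then show ?thesis
        using Cons.prems(3) False by auto
    next
      case False': False
      then have x1: "x \<in> set (forest_word (j + 1) cs)" "\<forall>y \<in> set ?M. \<not> concurrent a x y"
        using x word_tops_subset by auto
      show ?thesis
      proof (rule ccontr)
        assume "\<not> forest_last_piece j (c # cs) \<le> x"
        then have "x - j \<le> last_piece c"
          using False by simp
        then obtain y where "y \<in> set (tree_word c)" "concurrent a (x - j) y"
          using tree_word_covers[of a c "last_piece c" "x - j"] Cons.prems(2) False
            last_piece_in_tree_word forest_word_ge[OF x1(1)] by auto
        then have "y + j \<in> set ?M" "concurrent a x (y + j)"
          using concurrent_shift[of a "x - j" j y] by auto
        then show False
          using x1(2) by blast
      qed
    qed
  qed
qed simp

lemma last_piece_le_word_tops:
  assumes "nonroot_ok a c" "c \<noteq> PT []" "x \<in> word_tops a {} (tree_word c)"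
  shows "last_piece c \<le> x"
  using assms
proof (induction c arbitrary: x rule: ptree.induct)
  case (PT cs)
  have cs: "cs \<noteq> []" "length cs = a"
    using PT.prems by auto
  show ?case
  proof (cases "list_all (\<lambda>c. c = PT []) cs")
    case True
    then show ?thesis
      using PT.prems by (simp add: forest_word_leaves)
  next
    case False
    then obtain k where k: "k < length cs" "cs ! k \<noteq> PT []"
      by (auto simp: list_all_length)
    moreover have "0 \<in> set (tree_word (cs ! k))"
      using tree_word_Cons[OF k(2)] by (metis list.set_intros(1))
    ultimately have "int k \<in> set (forest_word 0 cs)"
      by (auto simp: set_forest_word intro!: exI[of _ k])
    moreover have "concurrent a 0 (int k)"
      using k cs by (simp add: concurrent_iff)
    moreover have "x \<in> {x \<in> word_tops a {} [0]. \<forall>y \<in> set (forest_word 0 cs). \<not> concurrent a x y}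
                          \<union> word_tops a {} (forest_word 0 cs)"
      using PT.prems cs word_tops_append[of a "[0]" "forest_word 0 cs"] by simp
    ultimately have "x \<in> word_tops a {} (forest_word 0 cs)"
      by auto
    then have "forest_last_piece 0 cs \<le> x"
      using PT.prems PT.IH False by (intro forest_last_piece_le_word_tops) (auto simp: list_all_iff)
    then show ?thesis
      using False by simp
  qed
qed

lemma prune_forest_last_piece_inj:
  assumes "\<not> list_all (\<lambda>c. c = PT []) cs" "\<not> list_all (\<lambda>c. c = PT []) ds"
    and "\<And>c d. c \<in> set cs \<Longrightarrow> d \<in> set ds \<Longrightarrow> c \<noteq> PT [] \<Longrightarrow> d \<noteq> PT [] \<Longrightarrow>
           prune c = prune d \<Longrightarrow> last_piece c = last_piece d \<Longrightarrow> c = d"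
    and "prune_forest cs = prune_forest ds" "forest_last_piece j cs = forest_last_piece j ds"
  shows "cs = ds"
  using assms
proof (induction cs arbitrary: ds j)
  case (Cons c cs)
  from Cons.prems(4) obtain d ds' where ds: "ds = d # ds'"
    by (cases ds) (auto split: if_splits)
  consider "c = PT []" "d = PT []" | "c = PT []" "d \<noteq> PT []" | "c \<noteq> PT []" "d = PT []"
    | "c \<noteq> PT []" "d \<noteq> PT []"
    by blast
  then show ?case
  proof cases
    case 1
    then have "cs = ds'"
      using Cons.prems ds by (intro Cons.IH[of ds' "j + 1"]) simp_all
    then show ?thesis
      using 1 ds by simp
  next
    case 2
    then have "prune d = PT []" "forest_last_piece (j + 1) cs = j + last_piece d"
      using Cons.prems(4,5) ds by auto
    moreover have "j + 1 \<le> forest_last_piece (j + 1) cs"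
      using Cons.prems(1) ds 2 by (intro forest_last_piece_ge) simp
    ultimately show ?thesis
      using last_piece_prune_leaf[OF 2(2)] by simp
  next
    case 3
    then have "prune c = PT []" "forest_last_piece (j + 1) ds' = j + last_piece c"
      using Cons.prems(4,5) ds by auto
    moreover have "j + 1 \<le> forest_last_piece (j + 1) ds'"
      using Cons.prems(2) ds 3 by (intro forest_last_piece_ge) simp
    ultimately show ?thesis
      using last_piece_prune_leaf[OF 3(1)] by simp
  next
    case 4
    then have "prune c = prune d" "cs = ds'" "last_piece c = last_piece d"
      using Cons.prems(4,5) ds by auto
    then show ?thesis
      using Cons.prems(3)[of c d] ds 4 by simp
  qed
qed simp

lemma prune_last_piece_inj:
  assumes "nonroot_ok a c" "nonroot_ok a d" "c \<noteq> PT []" "d \<noteq> PT []"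
    and "prune c = prune d" "last_piece c = last_piece d"
  shows "c = d"
  using assms
proof (induction c arbitrary: d rule: ptree.induct)
  case (PT cs)
  obtain ds where d: "d = PT ds"
    by (cases d)
  have len: "length cs = a" "length ds = a"
    using PT.prems d by auto
  have "list_all (\<lambda>c. c = PT []) cs \<longleftrightarrow> list_all (\<lambda>c. c = PT []) ds"
    using PT.prems(5) d prune_forest_nonleaf[of cs] prune_forest_nonleaf[of ds]
    by (cases "list_all (\<lambda>c. c = PT []) cs"; cases "list_all (\<lambda>c. c = PT []) ds") simp_all
  show ?case
  proof (cases "list_all (\<lambda>c. c = PT []) cs")
    case True
    then have "cs = replicate a (PT [])" "ds = replicate a (PT [])"
      using \<open>_ \<longleftrightarrow> _\<close> len replicate_length_same[of cs "PT []"] replicate_length_same[of ds "PT []"]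
      by (simp_all add: list_all_iff)
    then show ?thesis
      using d by simp
  next
    case False
    then have Fd: "\<not> list_all (\<lambda>c. c = PT []) ds"
      using \<open>_ \<longleftrightarrow> _\<close> by simp
    have "c' = d'"
      if "c' \<in> set cs" "d' \<in> set ds" "c' \<noteq> PT []" "d' \<noteq> PT []"
        "prune c' = prune d'" "last_piece c' = last_piece d'" for c' d'
      using PT.IH[of c' d'] PT.prems(1,2) d that by (simp add: list_all_iff)
    moreover have "prune_forest cs = prune_forest ds" "forest_last_piece 0 cs = forest_last_piece 0 ds"
      using PT.prems(5,6) False Fd d by simp_all
    ultimately have "cs = ds"
      by (rule prune_forest_last_piece_inj[OF False Fd])
    then show ?thesis
      using d by simp
  qed
qed

lemma anchored_forest_word:
  assumes "\<And>c. c \<in> set cs \<Longrightarrow> anchored a {0} (tl (tree_word c))"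
    and "0 \<in> S" "0 \<le> j" "j + int (length cs) \<le> int a"
  shows "anchored a S (forest_word j cs)"
  using assms
proof (induction cs arbitrary: j S)
  case (Cons c cs)
  have "anchored a (S \<union> set (forest_word (j + 1) cs)) (map (\<lambda>x. x + j) (tree_word c))"
  proof (cases "c = PT []")
    case False
    have "anchored a ((\<lambda>x. x + j) ` {0}) (map (\<lambda>x. x + j) (tl (tree_word c)))"
      using Cons.prems(1) by (intro anchored_shift) simp
    then have "anchored a (insert j (S \<union> set (forest_word (j + 1) cs))) (map (\<lambda>x. x + j) (tl (tree_word c)))"
      by (rule anchored_mono) auto
    moreover have "concurrent a j 0"
      using Cons.prems(3,4) by (simp add: concurrent_iff)
    moreover have "map (\<lambda>x. x + j) (tree_word c) = j # map (\<lambda>x. x + j) (tl (tree_word c))"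
      by (subst tree_word_Cons[OF False]) simp
    ultimately show ?thesis
      using Cons.prems(2) by auto
  qed simp
  moreover have "anchored a S (forest_word (j + 1) cs)"
    by (rule Cons.IH) (use Cons.prems in auto)
  ultimately show ?case
    by (simp add: anchored_append)
qed simp

lemma anchored_tree_word: "nonroot_ok a c \<Longrightarrow> anchored a {0} (tl (tree_word c))"
proof (induction c rule: ptree.induct)
  case (PT cs)
  show ?case
  proof (cases "cs = []")
    case False
    then have "anchored a {0} (forest_word 0 cs)"
      using PT by (intro anchored_forest_word) (auto simp: list_all_iff)
    then show ?thesis
      using False by simp
  qed simp
qed

lemma forest_word_grow_child:
  assumes "drop_equiv a (tree_word c') (tree_word c @ [s - j])"
  shows "drop_equiv a (forest_word j (c' # cs)) (forest_word j (c # cs) @ [s])"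
proof -
  have "drop_equiv a (map (\<lambda>x. x + j) (tree_word c')) (map (\<lambda>x. x + j) (tree_word c) @ [s])"
    using drop_equiv_shift[OF assms, of j] by simp
  then show ?thesis
    using drop_equiv_append[OF drop_equiv_refl[of a "forest_word (j + 1) cs"]] by simp
qed

lemma forest_word_grow_later:
  assumes "\<forall>y \<in> set (map (\<lambda>x. x + j) (tree_word c)). \<not> concurrent a s y"
    and "drop_equiv a (forest_word (j + 1) cs') (forest_word (j + 1) cs @ [s])"
  shows "drop_equiv a (forest_word j (c # cs')) (forest_word j (c # cs) @ [s])"
proof -
  let ?M = "map (\<lambda>x. x + j) (tree_word c)"
  have "drop_equiv a (forest_word (j + 1) cs' @ ?M) ((forest_word (j + 1) cs @ [s]) @ ?M)"
    by (intro drop_equiv_append drop_equiv_refl assms(2))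
  also have "drop_equiv a ((forest_word (j + 1) cs @ [s]) @ ?M) ((forest_word (j + 1) cs @ ?M) @ [s])"
    using drop_equiv_append[OF drop_equiv_refl drop_equiv_sym[OF drop_equiv_move_to_front[OF assms(1)]]]
    by simp
  finally show ?thesis
    by simp
qed

text \<open>A new piece joins the first child whose pieces it meets; if it meets none of them,
  it turns the leaf below it into a bud.  Pieces of later children commute with it.\<close>

lemma forest_word_snoc_drop_equiv:
  assumes "0 < a" "list_all (nonroot_ok a) cs"
    and grow: "\<And>c s. c \<in> set cs \<Longrightarrow> 0 \<le> s \<Longrightarrow> \<exists>y \<in> set (tree_word c). concurrent a s y \<Longrightarrow>
                 \<exists>c'. nonroot_ok a c' \<and> drop_equiv a (tree_word c') (tree_word c @ [s])"
    and "j \<le> s" "s < j + int (length cs) \<or> (\<exists>y \<in> set (forest_word j cs). concurrent a s y)"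
  shows "\<exists>cs'. length cs' = length cs \<and> list_all (nonroot_ok a) cs' \<and>
           drop_equiv a (forest_word j cs') (forest_word j cs @ [s])"
  using assms(2-)
proof (induction cs arbitrary: j)
  case Nil
  then show ?case by simp
next
  case (Cons c cs)
  let ?M = "map (\<lambda>x. x + j) (tree_word c)"
  consider "s = j" "c = PT []" | "\<exists>y \<in> set (tree_word c). concurrent a (s - j) y"
    | "\<not> (s = j \<and> c = PT [])" "\<not> (\<exists>y \<in> set (tree_word c). concurrent a (s - j) y)"
    by blast
  then show ?case
  proof cases
    case 1
    then have "forest_word j (bud a # cs) = forest_word j (c # cs) @ [s]"
      using tree_word_bud[OF \<open>0 < a\<close>] by simp
    then show ?thesis
      using Cons.prems(1) nonroot_ok_bud drop_equiv_refl by (intro exI[of _ "bud a # cs"]) auto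
  next
    case 2
    then obtain c' where "nonroot_ok a c'" "drop_equiv a (tree_word c') (tree_word c @ [s - j])"
      using Cons.prems(2)[of c "s - j"] Cons.prems(3) by auto
    then show ?thesis
      using Cons.prems(1) forest_word_grow_child by (intro exI[of _ "c' # cs"]) auto
  next
    case 3
    have nc: "\<forall>y \<in> set ?M. \<not> concurrent a s y"
      using 3(2) concurrent_shift[of a "s - j" j] by auto
    have "s \<noteq> j"
    proof
      assume "s = j"
      then have "0 \<in> set (tree_word c)"
        using 3(1) tree_word_Cons[of c] by (metis list.set_intros(1))
      then show False
        using 3(2) \<open>s = j\<close> concurrent_refl[OF \<open>0 < a\<close>] by auto
    qed
    then have le: "j + 1 \<le> s"
      using Cons.prems(3) by simp
    have disj: "s < j + 1 + int (length cs) \<or> (\<exists>y \<in> set (forest_word (j + 1) cs). concurrent a s y)"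
    proof -
      have "s < j + 1 + int (length cs) \<or> (\<exists>y \<in> set (forest_word (j + 1) cs) \<union> set ?M. concurrent a s y)"
        using Cons.prems(4) by (simp add: algebra_simps)
      then show ?thesis
        using nc by blast
    qed
    have grow_cs: "\<exists>c'. nonroot_ok a c' \<and> drop_equiv a (tree_word c') (tree_word d @ [t])"
      if "d \<in> set cs" "0 \<le> t" "\<exists>y \<in> set (tree_word d). concurrent a t y" for d t
      using Cons.prems(2)[of d t] that by simp
    have "\<exists>cs'. length cs' = length cs \<and> list_all (nonroot_ok a) cs' \<and>
            drop_equiv a (forest_word (j + 1) cs') (forest_word (j + 1) cs @ [s])"
      by (rule Cons.IH[OF _ grow_cs le disj]) (use Cons.prems(1) in simp)
    then obtain cs' where cs': "length cs' = length cs" "list_all (nonroot_ok a) cs'"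
      "drop_equiv a (forest_word (j + 1) cs') (forest_word (j + 1) cs @ [s])"
      by blast
    then have "drop_equiv a (forest_word j (c # cs')) (forest_word j (c # cs) @ [s])"
      using forest_word_grow_later[OF nc] by blast
    then show ?thesis
      using cs' Cons.prems(1) by (intro exI[of _ "c # cs'"]) auto
  qed
qed

lemma tree_word_snoc_drop_equiv:
  assumes "0 < a" "nonroot_ok a c" "0 \<le> s" "\<exists>y \<in> set (tree_word c). concurrent a s y"
  shows "\<exists>c'. nonroot_ok a c' \<and> drop_equiv a (tree_word c') (tree_word c @ [s])"
  using assms(2-)
proof (induction c arbitrary: s rule: ptree.induct)
  case (PT cs)
  have cs: "cs \<noteq> []" "length cs = a"
    using PT.prems by auto
  have "\<exists>c'. nonroot_ok a c' \<and> drop_equiv a (tree_word c') (tree_word c @ [t])"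
    if "c \<in> set cs" "0 \<le> t" "\<exists>y \<in> set (tree_word c). concurrent a t y" for c t
    using PT.IH[of c t] PT.prems(1) that by (simp add: list_all_iff)
  moreover have "s < 0 + int (length cs) \<or> (\<exists>y \<in> set (forest_word 0 cs). concurrent a s y)"
    using PT.prems(3) cs by (auto simp: concurrent_iff)
  moreover have "list_all (nonroot_ok a) cs"
    using PT.prems(1) by simp
  ultimately obtain cs' where cs': "length cs' = length cs" "list_all (nonroot_ok a) cs'"
    "drop_equiv a (forest_word 0 cs') (forest_word 0 cs @ [s])"
    using forest_word_snoc_drop_equiv[OF \<open>0 < a\<close> _ _ PT.prems(2)] by blast
  then have "drop_equiv a ([0] @ forest_word 0 cs') ([0] @ (forest_word 0 cs @ [s]))"
    by (intro drop_equiv_append drop_equiv_refl)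
  then show ?case
    using cs cs' by (intro exI[of _ "PT cs'"]) auto
qed

subsection \<open>Trees and right 0-pyramids\<close>

definition tree_heap :: "nat \<Rightarrow> ptree \<Rightarrow> (int \<times> nat) set" where
  "tree_heap a c = drop_word a {} (tree_word c)"

lemma card_tree_heap: "0 < a \<Longrightarrow> nonroot_ok a c \<Longrightarrow> card (tree_heap a c) = nonroot_nodes a c"
  using card_drop_word[of a "{}" "tree_word c"] length_tree_word by (simp add: tree_heap_def)

lemma right_zero_pyramid_tree_heap:
  assumes "0 < a" "nonroot_ok a c" "c \<noteq> PT []"
  shows "right_zero_pyramid a (tree_heap a c)"
proof -
  have "drop_piece a {} 0 = {(0, 0)}"
    by (simp add: drop_piece_def drop_level_def)
  then have H: "tree_heap a c = drop_word a {(0, 0)} (tl (tree_word c))"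
    unfolding tree_heap_def by (subst tree_word_Cons[OF assms(3)]) simp
  have "heap a (tree_heap a c)"
    unfolding tree_heap_def by (rule heap_drop_word[OF heap.heap_empty])
  moreover have "{p \<in> tree_heap a c. snd p = 0} = {(0, 0)}"
    using ground_drop_word_anchored[OF anchored_tree_word[OF assms(2)], of "{(0, 0)}"] H by auto
  moreover have "(0, 0) \<in> tree_heap a c"
    using H subset_drop_word by blast
  moreover have "\<not> t < 0" if "(t, h) \<in> tree_heap a c" for t h
  proof -
    have "t \<in> fst ` tree_heap a c"
      using that by force
    then have "t \<in> set (tree_word c)"
      by (simp add: tree_heap_def fst_drop_word)
    then show ?thesis
      using tree_word_nonneg by fastforce
  qed
  ultimately show ?thesis
    unfolding right_zero_pyramid_def pyramid_def by auto
qed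

lemma tree_heap_bud:
  assumes "0 < a"
  shows "tree_heap a (bud a) = {(0, 0)}"
  unfolding tree_heap_def tree_word_bud[OF assms] by (simp add: drop_piece_def drop_level_def)

lemma highest_piece_exists:
  fixes H :: "('a \<times> 'b::linorder) set"
  assumes "finite H" "H \<noteq> {}"
  obtains s d where "(s, d) \<in> H" "\<forall>(t, h) \<in> H. h \<le> d"
proof -
  have "Max (snd ` H) \<in> snd ` H"
    using assms by (intro Max_in) auto
  moreover have "\<forall>(t, h) \<in> H. h \<le> Max (snd ` H)"
    using assms(1) by (auto intro!: Max_ge image_eqI[where f = snd])
  ultimately show thesis
    using that by force
qed

lemma right_zero_pyramid_flat:
  assumes "right_zero_pyramid a H" "\<forall>(t, h) \<in> H. h = 0"
  shows "H = {(0, 0)}"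
proof -
  have "{p \<in> H. snd p = 0} = H"
    using assms(2) by auto
  then have "card H = 1"
    using assms(1) by (simp add: right_zero_pyramid_def pyramid_def)
  then show ?thesis
    using assms(1) unfolding right_zero_pyramid_def by (metis card_1_singletonE singletonD)
qed

lemma right_zero_pyramid_remove_top:
  assumes "0 < a" "right_zero_pyramid a H" "(s, d) \<in> H" "0 < d" "\<forall>(t, h) \<in> H. h \<le> d"
  shows "right_zero_pyramid a (H - {(s, d)})" "drop_level a (H - {(s, d)}) s = d"
    and "drop_piece a (H - {(s, d)}) s = H"
proof -
  have "heap a H"
    using assms(2) by (simp add: right_zero_pyramid_def pyramid_def)
  then have removed: "heap a (H - {(s, d)})" "drop_level a (H - {(s, d)}) s = d"
    using heap_remove_top[OF _ assms(1,3)] assms(5) by auto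
  have "{p \<in> H - {(s, d)}. snd p = 0} = {p \<in> H. snd p = 0}"
    using assms(4) by auto
  then show "right_zero_pyramid a (H - {(s, d)})"
    using removed(1) assms(2,4) unfolding right_zero_pyramid_def pyramid_def by auto
  show "drop_level a (H - {(s, d)}) s = d"
    by (rule removed(2))
  show "drop_piece a (H - {(s, d)}) s = H"
    using removed(2) assms(3) by (auto simp: drop_piece_def)
qed

lemma right_zero_pyramid_tree_heapE:
  assumes "0 < a" "right_zero_pyramid a H"
  obtains c where "nonroot_ok a c" "tree_heap a c = H"
  using assms(2)
proof (induction "card H" arbitrary: H thesis rule: less_induct)
  case less
  have fin: "finite H" and "(0, 0) \<in> H" and nonneg: "\<forall>(t, h) \<in> H. \<not> t < 0"
    using less.prems(2) heap_finite unfolding right_zero_pyramid_def pyramid_def by auto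
  then obtain s d where sd: "(s, d) \<in> H" and highest: "\<forall>(t, h) \<in> H. h \<le> d"
    using highest_piece_exists by blast
  show ?case
  proof (cases "d = 0")
    case True
    then have "H = {(0, 0)}"
      using right_zero_pyramid_flat[OF less.prems(2)] highest by auto
    then show ?thesis
      using less.prems(1) nonroot_ok_bud tree_heap_bud[OF assms(1)] by blast
  next
    case False
    let ?H = "H - {(s, d)}"
    note removed = right_zero_pyramid_remove_top[OF assms(1) less.prems(2) sd _ highest]
    have "card ?H < card H"
      using fin sd by (rule card_Diff1_less)
    then obtain c where c: "nonroot_ok a c" "tree_heap a c = ?H"
      using less.hyps removed(1) False by blast
    obtain t h where "(t, h) \<in> ?H" "concurrent a s t"
      using removed(2) False drop_level_pos_iff[of a ?H s] by auto
    then have "t \<in> set (tree_word c)"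
      using c(2) fst_drop_word[of a "{}" "tree_word c"] by (force simp: tree_heap_def)
    moreover have "0 \<le> s"
      using nonneg sd by auto
    ultimately obtain c' where "nonroot_ok a c'" "drop_equiv a (tree_word c') (tree_word c @ [s])"
      using tree_word_snoc_drop_equiv[OF assms(1) c(1)] \<open>concurrent a s t\<close> by blast
    moreover have "drop_word a {} (tree_word c @ [s]) = H"
      using c(2) removed(3) False by (simp add: tree_heap_def drop_word_snoc)
    ultimately show ?thesis
      using less.prems(1) by (simp add: drop_equiv_def tree_heap_def)
  qed
qed

lemma tree_heap_prune:
  "c \<noteq> PT [] \<Longrightarrow> tree_heap a c = drop_piece a (tree_heap a (prune c)) (last_piece c)"
  unfolding tree_heap_def by (subst tree_word_prune) (simp_all add: drop_word_snoc)

lemma tree_heap_eq_empty_iff: "tree_heap a c = {} \<longleftrightarrow> c = PT []"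
  using fst_drop_word[of a "{}" "tree_word c"] tree_word_eq_Nil_iff[of c]
  by (auto simp: tree_heap_def)

lemma last_piece_tree_heap:
  assumes "nonroot_ok a c" "nonroot_ok a d" "c \<noteq> PT []" "d \<noteq> PT []" "tree_heap a c = tree_heap a d"
  shows "last_piece c = last_piece d"
proof -
  have tops: "word_tops a {} (tree_word c) = word_tops a {} (tree_word d)"
    using arg_cong[OF assms(5), of "top_positions a"]
    by (simp add: tree_heap_def top_positions_drop_word_empty)
  have "last_piece c \<in> word_tops a {} (tree_word c)" "last_piece d \<in> word_tops a {} (tree_word d)"
    using last_in_word_tops tree_word_prune[OF assms(3)] tree_word_prune[OF assms(4)] by metis+
  then show ?thesis
    using last_piece_le_word_tops[OF assms(1,3)] last_piece_le_word_tops[OF assms(2,4)] tops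
    by (metis order_antisym)
qed

lemma tree_heap_inj:
  assumes "0 < a" "nonroot_ok a c" "nonroot_ok a d" "tree_heap a c = tree_heap a d"
  shows "c = d"
  using assms(2-)
proof (induction "length (tree_word c)" arbitrary: c d rule: less_induct)
  case less
  show ?case
  proof (cases "c = PT []")
    case True
    then have "tree_heap a c = {}"
      by (simp add: tree_heap_eq_empty_iff)
    then show ?thesis
      using less.prems(3) tree_heap_eq_empty_iff by metis
  next
    case False
    then have "d \<noteq> PT []"
      using less.prems(3) tree_heap_eq_empty_iff[of a c] tree_heap_eq_empty_iff[of a d] by blast
    have last: "last_piece c = last_piece d"
      using last_piece_tree_heap[OF less.prems(1,2) False \<open>d \<noteq> PT []\<close> less.prems(3)] .
    then have "drop_piece a (tree_heap a (prune c)) (last_piece c) =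
               drop_piece a (tree_heap a (prune d)) (last_piece c)"
      using less.prems(3) tree_heap_prune[OF False] tree_heap_prune[OF \<open>d \<noteq> PT []\<close>] by simp
    then have heap_eq: "tree_heap a (prune c) = tree_heap a (prune d)"
      using drop_piece_cancel[OF assms(1)] finite_drop_word[of "{}"] by (simp add: tree_heap_def)
    have "length (tree_word (prune c)) < length (tree_word c)"
      using arg_cong[OF tree_word_prune[OF False], of length] by simp
    then have "prune c = prune d"
      using less.hyps nonroot_ok_prune less.prems(1,2) heap_eq by blast
    then show ?thesis
      using prune_last_piece_inj[OF less.prems(1,2) False \<open>d \<noteq> PT []\<close> _ last] by simp
  qed
qed

lemma bij_betw_tree_heap:
  assumes "0 < a" "0 < m"
  shows "bij_betw (tree_heap a) {c. nonroot_ok a c \<and> nonroot_nodes a c = m}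
                                {H. right_zero_pyramid a H \<and> card H = m}"
proof (rule bij_betwI')
  fix c
  assume c: "c \<in> {c. nonroot_ok a c \<and> nonroot_nodes a c = m}"
  then have "c \<noteq> PT []"
    using assms by auto
  then show "tree_heap a c \<in> {H. right_zero_pyramid a H \<and> card H = m}"
    using c right_zero_pyramid_tree_heap[OF assms(1)] card_tree_heap[OF assms(1)] by simp
next
  fix H
  assume "H \<in> {H. right_zero_pyramid a H \<and> card H = m}"
  then show "\<exists>c \<in> {c. nonroot_ok a c \<and> nonroot_nodes a c = m}. H = tree_heap a c"
    using right_zero_pyramid_tree_heapE[OF assms(1)] card_tree_heap[OF assms(1)] by (metis mem_Collect_eq)
qed (use tree_heap_inj[OF assms(1)] in blast)

lemma bij_betw_plant:
  assumes "0 < a"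
  shows "bij_betw (\<lambda>c. PT [c]) {c. nonroot_ok a c \<and> nonroot_nodes a c = m}
                               {t. nary_tree a t \<and> num_nodes a t = m}"
proof (rule bij_betwI')
  fix t
  assume "t \<in> {t. nary_tree a t \<and> num_nodes a t = m}"
  then obtain c where "t = PT [c]" "nonroot_ok a c" "nonroot_nodes a c = m"
    using assms by (cases t) (auto simp: nary_tree_def num_nodes_def length_Suc_conv)
  then show "\<exists>c \<in> {c. nonroot_ok a c \<and> nonroot_nodes a c = m}. t = PT [c]"
    by blast
qed (use assms in \<open>auto simp: nary_tree_def num_nodes_def\<close>)

theorem proposition2:
  fixes a m :: nat
  assumes "a \<ge> 3" and "m \<ge> 1"
  shows "\<exists>f. bij_betw f {H. right_zero_pyramid a H \<and> card H = m}
                        {t. nary_tree a t \<and> num_nodes a t = m}"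
proof -
  have "0 < a" "0 < m"
    using assms by simp_all
  then show ?thesis
    using bij_betw_trans[OF bij_betw_inv_into[OF bij_betw_tree_heap] bij_betw_plant] by blast
qed

end
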